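(* The class of induced subgraphs of the square grid is $(6,1)$-disjointness-expressing.
   Context: The square grid is the infinite graph with vertex set $\mathbb{Z}^2$ in which two points are adjacent iff their Euclidean distance is 1; an induced subgraph of the square grid means a finite graph isomorphic to an induced subgraph of it. A class $\mathcal{C}$ of graphs is $(s,\kappa)$-disjointness-expressing if for some constant $\alpha>0$, for every positive integer $N$ and every $X\subseteq\{1,\dots,N\}$ one can define graphs $L(X)$ and $R(X)$, each containing a labelled set $S$ of special vertices, such that for all $A,B\subseteq\{1,\dots,N\}$: (i) the graph $g(L(A),R(B))$ obtained by identifying each vertex of $S$ in $L(A)$ with the corresponding vertex of $S$ in $R(B)$ is connected and has at most $\alpha N^{1/\kappa}$ vertices; (ii) the subgraph of $g(L(A),R(B))$ induced by the closed neighborhood $N[S]$ is independent of $A,B$ (for all $A,A',B,B'$ there is an isomorphism between these induced subgraphs that is the identity on $S$) and has at most $s$ vertices; (iii) $g(L(A),R(B))\in\mathcal{C}$ if and only if $A\cap B=\emptyset$. *)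

theory Defs
  imports Complex_Main
begin

text \<open>Finite simple graphs: a vertex set together with a set of ordered pairs
  (edges stored in both directions).\<close>
type_synonym 'v graph = "'v set \<times> ('v \<times> 'v) set"

definition verts :: "'v graph \<Rightarrow> 'v set" where "verts G = fst G"
definition edges :: "'v graph \<Rightarrow> ('v \<times> 'v) set" where "edges G = snd G"

definition simple_graph :: "'v graph \<Rightarrow> bool" where
  "simple_graph G \<longleftrightarrow> finite (verts G) \<and> edges G \<subseteq> verts G \<times> verts G
     \<and> sym (edges G) \<and> irrefl (edges G)"

definition connected_graph :: "'v graph \<Rightarrow> bool" where
  "connected_graph G \<longleftrightarrow> (\<forall>u\<in>verts G. \<forall>v\<in>verts G. (u, v) \<in> (edges G)\<^sup>*)"

definition induced_sub :: "'v graph \<Rightarrow> 'v set \<Rightarrow> 'v graph" where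
  "induced_sub G U = (verts G \<inter> U, edges G \<inter> (U \<times> U))"

definition closed_nbhd :: "'v graph \<Rightarrow> 'v set \<Rightarrow> 'v set" where
  "closed_nbhd G S = (verts G \<inter> S) \<union> {v \<in> verts G. \<exists>u\<in>S. (u, v) \<in> edges G}"

definition iso_fixing :: "'v set \<Rightarrow> 'v graph \<Rightarrow> 'v graph \<Rightarrow> bool" where
  "iso_fixing S G H \<longleftrightarrow> (\<exists>f. bij_betw f (verts G) (verts H)
     \<and> (\<forall>u\<in>verts G. \<forall>v\<in>verts G. (u, v) \<in> edges G \<longleftrightarrow> (f u, f v) \<in> edges H)
     \<and> (\<forall>x\<in>S \<inter> verts G. f x = x))"

text \<open>Gluing: disjoint union of L and R in which each special vertex x \<in> S of R
  is identified with the vertex x \<in> S of L (the labelling of S is the identity).\<close>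
definition glue_map :: "'v set \<Rightarrow> 'v \<Rightarrow> 'v + 'v" where
  "glue_map S v = (if v \<in> S then Inl v else Inr v)"

definition glue :: "'v set \<Rightarrow> 'v graph \<Rightarrow> 'v graph \<Rightarrow> ('v + 'v) graph" where
  "glue S L R =
     (Inl ` verts L \<union> glue_map S ` verts R,
      (\<lambda>(u, v). (Inl u, Inl v)) ` edges L \<union> (\<lambda>(u, v). (glue_map S u, glue_map S v)) ` edges R)"

definition grid_adj :: "int \<times> int \<Rightarrow> int \<times> int \<Rightarrow> bool" where
  "grid_adj p q \<longleftrightarrow>
     sqrt (real_of_int ((fst p - fst q)^2 + (snd p - snd q)^2)) = 1"

definition grid_induced :: "'v graph \<Rightarrow> bool" where
  "grid_induced G \<longleftrightarrow> finite (verts G) \<and>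
     (\<exists>f :: 'v \<Rightarrow> int \<times> int. inj_on f (verts G) \<and>
        (\<forall>u\<in>verts G. \<forall>v\<in>verts G. (u, v) \<in> edges G \<longleftrightarrow> grid_adj (f u) (f v)))"

text \<open>(s,kappa)-disjointness-expressing classes. Vertices of L(X), R(X) are
  natural numbers; S (depending on N only) is the common labelled set of special
  vertices.\<close>
definition disjointness_expressing ::
  "((nat + nat) graph \<Rightarrow> bool) \<Rightarrow> nat \<Rightarrow> nat \<Rightarrow> bool" where
  "disjointness_expressing C s \<kappa> \<longleftrightarrow>
    (\<exists>\<alpha>::real. \<alpha> > 0 \<and>
      (\<forall>N::nat. N \<ge> 1 \<longrightarrow>
        (\<exists>(L :: nat set \<Rightarrow> nat graph) (R :: nat set \<Rightarrow> nat graph) (S :: nat set).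
          (\<forall>X. X \<subseteq> {1..N} \<longrightarrow>
             simple_graph (L X) \<and> simple_graph (R X) \<and>
             S \<subseteq> verts (L X) \<and> S \<subseteq> verts (R X)) \<and>
          (\<forall>A B. A \<subseteq> {1..N} \<longrightarrow> B \<subseteq> {1..N} \<longrightarrow>
             connected_graph (glue S (L A) (R B)) \<and>
             real (card (verts (glue S (L A) (R B)))) \<le> \<alpha> * real N powr (1 / real \<kappa>) \<and>
             card (closed_nbhd (glue S (L A) (R B)) (Inl ` S)) \<le> s \<and>
             (C (glue S (L A) (R B)) \<longleftrightarrow> A \<inter> B = {})) \<and>
          (\<forall>A B A' B'. A \<subseteq> {1..N} \<longrightarrow> B \<subseteq> {1..N} \<longrightarrow> A' \<subseteq> {1..N} \<longrightarrow> B' \<subseteq> {1..N} \<longrightarrow>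
             iso_fixing (Inl ` S)
               (induced_sub (glue S (L A) (R B)) (closed_nbhd (glue S (L A) (R B)) (Inl ` S)))
               (induced_sub (glue S (L A') (R B')) (closed_nbhd (glue S (L A') (R B')) (Inl ` S)))))))"

end

(*
  The gadget is a comb drawn on the lattice points with natural coordinates.  Its frame is a
  C-shaped band of width two: rows 0-1 and rows 4-5 of length 2N+3, joined by columns 0-1.
  L(A) is the lower left part of the frame together with a tooth (2i+1, 2) above row 1 for each
  i in A; R(B) is the upper right part of the frame together with a tooth (2i+1, 3) below row 4
  for each i in B.  The two halves share only the rung {2} x {4,5}, whose closed neighbourhood
  is the 2 x 3 block {1..3} x {4,5} for all A and B.

  If A and B are disjoint, the drawing itself is an induced grid embedding.  Conversely, a ladder
  of width two embeds into the grid only as a straight ladder, so every grid embedding of the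
  frame is a rigid motion of the drawing.  This pins each tooth to its drawn position, because
  the other three grid neighbours of its attachment point are taken; for i in both A and B the
  two teeth in column 2i+1 therefore land on adjacent grid points although they are not
  adjacent in the glued graph.
*)

theory Submission
  imports Defs "HOL-Library.Product_Plus" "HOL-Library.Nat_Bijection"
begin

section \<open>Images and unions of graphs\<close>

definition map_graph :: "('a \<Rightarrow> 'b) \<Rightarrow> 'a graph \<Rightarrow> 'b graph" where
  "map_graph f G = (f ` verts G, map_prod f f ` edges G)"

lemma verts_map_graph [simp]: "verts (map_graph f G) = f ` verts G"
  by (simp add: map_graph_def verts_def)

lemma edges_map_graph [simp]: "edges (map_graph f G) = map_prod f f ` edges G"
  by (simp add: map_graph_def edges_def)

lemma map_graph_cong:
  assumes "\<And>v. v \<in> verts G \<Longrightarrow> f v = h v" "edges G \<subseteq> verts G \<times> verts G"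
  shows "map_graph f G = map_graph h G"
  using assms unfolding map_graph_def by (force intro!: image_cong)

lemma map_graph_edge_iff:
  assumes "inj_on f (verts G)" "edges G \<subseteq> verts G \<times> verts G" "u \<in> verts G" "v \<in> verts G"
  shows "(f u, f v) \<in> edges (map_graph f G) \<longleftrightarrow> (u, v) \<in> edges G"
  using assms by (force simp: inj_on_eq_iff)

lemma simple_graph_map_graph:
  assumes "inj f" "simple_graph G"
  shows "simple_graph (map_graph f G)"
  using assms unfolding simple_graph_def sym_def irrefl_def
  by (force simp: inj_eq)

lemma connected_graph_map_graph:
  assumes "connected_graph G"
  shows "connected_graph (map_graph f G)"
  unfolding connected_graph_def
proof (intro ballI)
  fix x y assume "x \<in> verts (map_graph f G)" "y \<in> verts (map_graph f G)"
  then obtain u v where uv: "u \<in> verts G" "v \<in> verts G" "x = f u" "y = f v" by auto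
  have "(u, v) \<in> (edges G)\<^sup>*" using assms uv unfolding connected_graph_def by blast
  then have "(f u, f v) \<in> (edges (map_graph f G))\<^sup>*"
  proof (induction rule: rtrancl_induct)
    case (step b c)
    then have "(f b, f c) \<in> edges (map_graph f G)" by force
    with step.IH show ?case by (rule rtrancl_into_rtrancl)
  qed simp
  with uv show "(x, y) \<in> (edges (map_graph f G))\<^sup>*" by simp
qed

lemma grid_induced_map_graph:
  assumes inj: "inj_on f (verts G)" and wf: "edges G \<subseteq> verts G \<times> verts G"
  shows "grid_induced (map_graph f G) \<longleftrightarrow> grid_induced G"
proof
  assume "grid_induced (map_graph f G)"
  then obtain h where "finite (f ` verts G)" "inj_on h (f ` verts G)"
    "\<forall>u\<in>f ` verts G. \<forall>v\<in>f ` verts G. (u, v) \<in> edges (map_graph f G) \<longleftrightarrow> grid_adj (h u) (h v)"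
    unfolding grid_induced_def by auto
  with inj show "grid_induced G" unfolding grid_induced_def
    by (intro conjI exI[of _ "h \<circ> f"])
       (simp_all add: finite_image_iff comp_inj_on map_graph_edge_iff[OF inj wf, symmetric])
next
  assume "grid_induced G"
  then obtain h where "finite (verts G)" "inj_on h (verts G)"
    "\<forall>u\<in>verts G. \<forall>v\<in>verts G. (u, v) \<in> edges G \<longleftrightarrow> grid_adj (h u) (h v)"
    unfolding grid_induced_def by blast
  moreover have "inj_on (h \<circ> inv_into (verts G) f) (f ` verts G)"
    using inj \<open>inj_on h (verts G)\<close> by (simp add: comp_inj_on inj_on_inv_into)
  ultimately show "grid_induced (map_graph f G)" unfolding grid_induced_def
    by (intro conjI exI[of _ "h \<circ> inv_into (verts G) f"])
       (auto simp: inj simp flip: map_graph_edge_iff[OF inj wf])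
qed

lemma closed_nbhd_map_graph:
  assumes inj: "inj_on f (verts G)" and wf: "edges G \<subseteq> verts G \<times> verts G" and T: "T \<subseteq> verts G"
  shows "closed_nbhd (map_graph f G) (f ` T) = f ` closed_nbhd G T"
proof -
  have "{x \<in> f ` verts G. \<exists>y\<in>f ` T. (y, x) \<in> edges (map_graph f G)}
      = f ` {v \<in> verts G. \<exists>u\<in>T. (f u, f v) \<in> edges (map_graph f G)}"
    by (auto simp del: edges_map_graph)
  also have "{v \<in> verts G. \<exists>u\<in>T. (f u, f v) \<in> edges (map_graph f G)}
      = {v \<in> verts G. \<exists>u\<in>T. (u, v) \<in> edges G}"
    using map_graph_edge_iff[OF inj wf] T by blast
  finally show ?thesis
    using T by (simp add: closed_nbhd_def image_Un Int_absorb1 image_mono)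
qed

lemma induced_sub_map_graph:
  assumes inj: "inj_on f (verts G)" and wf: "edges G \<subseteq> verts G \<times> verts G" and U: "U \<subseteq> verts G"
  shows "induced_sub (map_graph f G) (f ` U) = map_graph f (induced_sub G U)"
proof -
  have "map_prod f f ` edges G \<inter> (f ` U \<times> f ` U) \<subseteq> map_prod f f ` (edges G \<inter> (U \<times> U))"
  proof
    fix x assume "x \<in> map_prod f f ` edges G \<inter> (f ` U \<times> f ` U)"
    then obtain a b where ab: "(a, b) \<in> edges G" "x = (f a, f b)" and "f a \<in> f ` U" "f b \<in> f ` U"
      by blast
    moreover have "a \<in> verts G" "b \<in> verts G" using ab(1) wf by auto
    ultimately have "a \<in> U" "b \<in> U" using inj_on_image_mem_iff[OF inj _ U] by blast+
    with ab show "x \<in> map_prod f f ` (edges G \<inter> (U \<times> U))" by auto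
  qed
  then have "map_prod f f ` edges G \<inter> (f ` U \<times> f ` U) = map_prod f f ` (edges G \<inter> (U \<times> U))"
    by auto
  moreover have "f ` verts G \<inter> f ` U = f ` (verts G \<inter> U)"
    using U by auto
  ultimately show ?thesis
    by (simp add: induced_sub_def map_graph_def verts_def edges_def)
qed

definition graph_union :: "'a graph \<Rightarrow> 'a graph \<Rightarrow> 'a graph" where
  "graph_union G H = (verts G \<union> verts H, edges G \<union> edges H)"

lemma verts_graph_union [simp]: "verts (graph_union G H) = verts G \<union> verts H"
  by (simp add: graph_union_def verts_def)

lemma edges_graph_union [simp]: "edges (graph_union G H) = edges G \<union> edges H"
  by (simp add: graph_union_def edges_def)

lemma glue_map_graph:
  assumes inj: "inj f" and wf: "edges G \<subseteq> verts G \<times> verts G" "edges H \<subseteq> verts H \<times> verts H"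
    and S: "verts G \<inter> verts H = S"
  shows "glue (f ` S) (map_graph f G) (map_graph f H)
    = map_graph (\<lambda>v. if v \<in> verts G then Inl (f v) else Inr (f v)) (graph_union G H)"
    (is "_ = map_graph ?side _")
proof -
  have side_H: "glue_map (f ` S) (f v) = ?side v" if "v \<in> verts H" for v
    using inj S that by (auto simp: glue_map_def inj_image_mem_iff)
  have vG: "Inl ` f ` verts G = ?side ` verts G"
    unfolding image_image by (rule image_cong) simp_all
  have vH: "glue_map (f ` S) ` f ` verts H = ?side ` verts H"
    unfolding image_image by (rule image_cong) (simp_all add: side_H)
  have eG: "(\<lambda>(u, v). (Inl u, Inl v)) ` map_prod f f ` edges G = map_prod ?side ?side ` edges G"
    unfolding image_image by (rule image_cong) (use wf(1) in auto)
  have eH: "(\<lambda>(u, v). (glue_map (f ` S) u, glue_map (f ` S) v)) ` map_prod f f ` edges H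
      = map_prod ?side ?side ` edges H"
    unfolding image_image by (rule image_cong) (use wf(2) side_H in auto)
  show ?thesis
    unfolding glue_def verts_map_graph edges_map_graph vG vH eG eH
    unfolding map_graph_def verts_graph_union edges_graph_union image_Un ..
qed

lemma connected_graph_descent:
  fixes m :: "'a \<Rightarrow> nat"
  assumes "sym (edges G)"
    and descent: "\<And>p. p \<in> verts G \<Longrightarrow> p \<noteq> r \<Longrightarrow> \<exists>q\<in>verts G. (p, q) \<in> edges G \<and> m q < m p"
  shows "connected_graph G"
proof -
  have to_root: "(p, r) \<in> (edges G)\<^sup>*" if "p \<in> verts G" for p
    using that
  proof (induction "m p" arbitrary: p rule: less_induct)
    case less
    show ?case
    proof (cases "p = r")
      case False
      then obtain q where "q \<in> verts G" "(p, q) \<in> edges G" "m q < m p"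
        using descent less.prems by blast
      with less.hyps show ?thesis by (blast intro: converse_rtrancl_into_rtrancl)
    qed simp
  qed
  have "(edges G)\<inverse> = edges G" using \<open>sym (edges G)\<close> by (simp add: sym_conv_converse_eq)
  then have from_root: "(r, v) \<in> (edges G)\<^sup>*" if "v \<in> verts G" for v
    using rtrancl_converseI[OF to_root[OF that]] by simp
  show ?thesis
    unfolding connected_graph_def using to_root from_root by (blast intro: rtrancl_trans)
qed

lemma iso_fixing_refl: "iso_fixing S G G"
  unfolding iso_fixing_def by (intro exI[of _ id]) auto

lemma disjointness_expressingI:
  fixes L R :: "nat \<Rightarrow> nat set \<Rightarrow> nat graph" and S :: "nat \<Rightarrow> nat set"
  assumes "\<alpha> > 0"
    and "\<And>N X. 1 \<le> N \<Longrightarrow> X \<subseteq> {1..N} \<Longrightarrow>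
      simple_graph (L N X) \<and> simple_graph (R N X) \<and> S N \<subseteq> verts (L N X) \<and> S N \<subseteq> verts (R N X)"
    and "\<And>N A B. 1 \<le> N \<Longrightarrow> A \<subseteq> {1..N} \<Longrightarrow> B \<subseteq> {1..N} \<Longrightarrow>
      connected_graph (glue (S N) (L N A) (R N B)) \<and>
      real (card (verts (glue (S N) (L N A) (R N B)))) \<le> \<alpha> * real N powr (1 / real \<kappa>) \<and>
      card (closed_nbhd (glue (S N) (L N A) (R N B)) (Inl ` S N)) \<le> s \<and>
      (C (glue (S N) (L N A) (R N B)) \<longleftrightarrow> A \<inter> B = {})"
    and "\<And>N A B A' B'. 1 \<le> N \<Longrightarrow> A \<subseteq> {1..N} \<Longrightarrow> B \<subseteq> {1..N} \<Longrightarrow>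
      A' \<subseteq> {1..N} \<Longrightarrow> B' \<subseteq> {1..N} \<Longrightarrow>
      induced_sub (glue (S N) (L N A) (R N B)) (closed_nbhd (glue (S N) (L N A) (R N B)) (Inl ` S N))
      = induced_sub (glue (S N) (L N A') (R N B')) (closed_nbhd (glue (S N) (L N A') (R N B')) (Inl ` S N))"
  shows "disjointness_expressing C s \<kappa>"
proof -
  have iso: "iso_fixing (Inl ` S N)
      (induced_sub (glue (S N) (L N A) (R N B)) (closed_nbhd (glue (S N) (L N A) (R N B)) (Inl ` S N)))
      (induced_sub (glue (S N) (L N A') (R N B')) (closed_nbhd (glue (S N) (L N A') (R N B')) (Inl ` S N)))"
    if "1 \<le> N" "A \<subseteq> {1..N}" "B \<subseteq> {1..N}" "A' \<subseteq> {1..N}" "B' \<subseteq> {1..N}" for N A B A' B'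
    using assms(4)[OF that] by (simp add: iso_fixing_refl)
  show ?thesis
    unfolding disjointness_expressing_def
    apply (intro exI[of _ \<alpha>] conjI allI impI)
     apply (fact \<open>\<alpha> > 0\<close>)
    subgoal for N
      apply (rule exI[of _ "L N"], rule exI[of _ "R N"], rule exI[of _ "S N"], intro conjI allI impI)
      using assms(2,3)[of N] iso[of N] by simp_all
    done
qed

section \<open>Ladders in the square grid\<close>

definition unit_vec :: "int \<times> int \<Rightarrow> bool" where
  "unit_vec d \<longleftrightarrow> \<bar>fst d\<bar> + \<bar>snd d\<bar> = 1"

lemma unit_vec_iff: "unit_vec d \<longleftrightarrow> d \<in> {(1, 0), (-1, 0), (0, 1), (0, -1)}"
  by (cases d) (auto simp: unit_vec_def abs_if)

lemma unit_vec_cases: "unit_vec d \<Longrightarrow> d = (1, 0) \<or> d = (-1, 0) \<or> d = (0, 1) \<or> d = (0, -1)"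
  by (simp add: unit_vec_iff)

lemma unit_vec_uminus [simp]: "unit_vec (- d) \<longleftrightarrow> unit_vec d"
  by (simp add: unit_vec_def)

lemma int_sum_squares_eq_1: "(a::int)\<^sup>2 + b\<^sup>2 = 1 \<longleftrightarrow> \<bar>a\<bar> + \<bar>b\<bar> = 1"
proof
  assume sq: "a\<^sup>2 + b\<^sup>2 = 1"
  then have "a\<^sup>2 \<le> 1" "b\<^sup>2 \<le> 1"
    using zero_le_power2[of a] zero_le_power2[of b] by linarith+
  then have "a \<in> {-1, 0, 1}" "b \<in> {-1, 0, 1}"
    unfolding abs_square_le_1 by auto
  with sq show "\<bar>a\<bar> + \<bar>b\<bar> = 1" by auto
next
  assume "\<bar>a\<bar> + \<bar>b\<bar> = 1"
  then show "a\<^sup>2 + b\<^sup>2 = 1"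
    using unit_vec_iff[of "(a, b)"] by (auto simp: unit_vec_def)
qed

lemma grid_adj_iff_unit_vec: "grid_adj p q \<longleftrightarrow> unit_vec (q - p)"
proof -
  have "grid_adj p q \<longleftrightarrow> (fst p - fst q)\<^sup>2 + (snd p - snd q)\<^sup>2 = 1"
    unfolding grid_adj_def real_sqrt_eq_1_iff by (metis of_int_eq_1_iff)
  then show ?thesis
    unfolding int_sum_squares_eq_1 unit_vec_def by (simp add: abs_minus_commute)
qed

lemma grid_adj_sym: "grid_adj p q \<longleftrightarrow> grid_adj q p"
  by (metis grid_adj_iff_unit_vec minus_diff_eq unit_vec_uminus)

definition orth :: "int \<times> int \<Rightarrow> int \<times> int \<Rightarrow> bool" where
  "orth u v \<longleftrightarrow> fst u * fst v + snd u * snd v = 0"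

lemma grid_square:
  assumes "grid_adj p q" "grid_adj q r" "grid_adj r s" "grid_adj s p" "p \<noteq> r" "q \<noteq> s"
  shows "r - q = s - p" "orth (q - p) (s - p)"
proof -
  define u v w where "u = q - p" and "v = s - p" and "w = r - q"
  have "unit_vec u" "unit_vec v" "unit_vec w" "unit_vec (v - u - w)"
    using assms(1-4) unfolding u_def v_def w_def grid_adj_iff_unit_vec
    by (simp_all add: algebra_simps) (metis minus_diff_eq unit_vec_uminus)
  moreover have "u + w \<noteq> 0" "u \<noteq> v"
    using assms(5,6) by (auto simp: u_def v_def w_def algebra_simps)
  ultimately have "w = v \<and> orth u v"
    unfolding unit_vec_iff[of u] unit_vec_iff[of v] unit_vec_iff[of w]
    by (auto simp: orth_def unit_vec_def zero_prod_def)
  then show "r - q = s - p" "orth (q - p) (s - p)"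
    by (simp_all add: u_def v_def w_def)
qed

lemma orth_unit_vec_cases:
  assumes "unit_vec u" "unit_vec u'" "unit_vec e" "orth u e" "orth u' e"
  shows "u' = u \<or> u' = - u"
  using assms by (auto dest!: unit_vec_cases simp: orth_def)

lemma grid_adj_forced:
  assumes "unit_vec u" "unit_vec e" "orth u e" "grid_adj z w"
    and "w \<noteq> z + u" "w \<noteq> z - u" "w \<noteq> z - e"
  shows "w = z + e"
proof -
  have "unit_vec (w - z)" using assms(4) by (simp add: grid_adj_iff_unit_vec)
  moreover have "w - z \<noteq> u" "w - z \<noteq> - u" "w - z \<noteq> - e"
    using assms(5-7) by (auto simp: algebra_simps)
  ultimately have "w - z = e"
    using assms(1-3) by (auto dest!: unit_vec_cases simp: orth_def)
  then show ?thesis by (simp add: algebra_simps)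
qed

definition lattice_adj :: "nat \<times> nat \<Rightarrow> nat \<times> nat \<Rightarrow> bool" where
  "lattice_adj p q \<longleftrightarrow> grid_adj (map_prod int int p) (map_prod int int q)"

lemma lattice_adj_iff:
  "lattice_adj (a, b) (x, y) \<longleftrightarrow>
     x = a + 1 \<and> y = b \<or> a = x + 1 \<and> y = b \<or> x = a \<and> y = b + 1 \<or> x = a \<and> b = y + 1"
  unfolding lattice_adj_def grid_adj_iff_unit_vec unit_vec_def by (simp add: abs_if) arith

lemma lattice_adj_sym: "lattice_adj p q \<longleftrightarrow> lattice_adj q p"
  unfolding lattice_adj_def using grid_adj_sym by blast

definition grid_inj_hom :: "(nat \<times> nat) set \<Rightarrow> (nat \<times> nat \<Rightarrow> int \<times> int) \<Rightarrow> bool" where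
  "grid_inj_hom Q g \<longleftrightarrow> inj_on g Q \<and> (\<forall>p\<in>Q. \<forall>q\<in>Q. lattice_adj p q \<longrightarrow> grid_adj (g p) (g q))"

lemma grid_inj_hom_mono: "grid_inj_hom Q g \<Longrightarrow> T \<subseteq> Q \<Longrightarrow> grid_inj_hom T g"
  unfolding grid_inj_hom_def by (blast intro: inj_on_subset)

lemma grid_inj_hom_comp:
  assumes "grid_inj_hom Q g" "f ` T \<subseteq> Q" "inj_on f T"
    and "\<And>p q. p \<in> T \<Longrightarrow> q \<in> T \<Longrightarrow> lattice_adj p q \<Longrightarrow> lattice_adj (f p) (f q)"
  shows "grid_inj_hom T (g \<circ> f)"
proof -
  have "inj_on g (f ` T)" using assms(1,2) unfolding grid_inj_hom_def by (blast intro: inj_on_subset)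
  with assms show ?thesis
    unfolding grid_inj_hom_def by (auto simp: comp_inj_on image_subset_iff)
qed

lemma grid_ladder_rigid:
  assumes "grid_inj_hom ({..M} \<times> {0, 1}) h"
  shows "k \<le> M \<Longrightarrow> h (k, 1) - h (k, 0) = h (0, 1) - h (0, 0)"
    and "k < M \<Longrightarrow> h (Suc k, 0) - h (k, 0) = h (1, 0) - h (0, 0)"
    and "0 < M \<Longrightarrow> orth (h (1, 0) - h (0, 0)) (h (0, 1) - h (0, 0))"
proof -
  have adj: "grid_adj (h p) (h q)" if "p \<in> {..M} \<times> {0, 1}" "q \<in> {..M} \<times> {0, 1}" "lattice_adj p q" for p q
    using assms that unfolding grid_inj_hom_def by blast
  have inj: "h p \<noteq> h q" if "p \<in> {..M} \<times> {0, 1}" "q \<in> {..M} \<times> {0, 1}" "p \<noteq> q" for p q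
    using assms that unfolding grid_inj_hom_def by (meson inj_on_contraD)
  have square: "h (Suc k, 1) - h (Suc k, 0) = h (k, 1) - h (k, 0)"
      "orth (h (Suc k, 0) - h (k, 0)) (h (k, 1) - h (k, 0))" if "k < M" for k
    using grid_square[of "h (k, 0)" "h (Suc k, 0)" "h (Suc k, 1)" "h (k, 1)"] that
    by (simp_all add: adj inj lattice_adj_iff)
  show rung: "h (k, 1) - h (k, 0) = h (0, 1) - h (0, 0)" if "k \<le> M" for k
    using that
  proof (induction k)
    case (Suc k)
    then show ?case using square(1)[of k] by simp
  qed simp
  have orth_steps: "orth (h (Suc k, 0) - h (k, 0)) (h (0, 1) - h (0, 0))" if "k < M" for k
    using square(2)[OF that] rung[of k] that by simp
  show "h (Suc k, 0) - h (k, 0) = h (1, 0) - h (0, 0)" if "k < M" for k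
    using that
  proof (induction k)
    case (Suc k)
    have "h (Suc (Suc k), 0) - h (Suc k, 0) = h (Suc k, 0) - h (k, 0)
        \<or> h (Suc (Suc k), 0) - h (Suc k, 0) = - (h (Suc k, 0) - h (k, 0))"
      using Suc.prems
      by (intro orth_unit_vec_cases[OF _ _ _ orth_steps orth_steps])
         (simp_all add: adj lattice_adj_iff flip: grid_adj_iff_unit_vec)
    moreover have "h (k, 0) \<noteq> h (Suc (Suc k), 0)"
      using Suc.prems by (simp add: inj)
    ultimately show ?case
      using Suc by (auto simp: algebra_simps)
  qed simp
  show "orth (h (1, 0) - h (0, 0)) (h (0, 1) - h (0, 0))" if "0 < M"
    using orth_steps[OF that] by simp
qed

section \<open>The comb\<close>

definition comb_length :: "nat \<Rightarrow> nat" where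
  "comb_length N = 2 * N + 2"

definition frame :: "nat \<Rightarrow> (nat \<times> nat) set" where
  "frame N = {..comb_length N} \<times> {0, 1, 4, 5} \<union> {..1} \<times> {..5}"

definition L_points :: "nat \<Rightarrow> nat set \<Rightarrow> (nat \<times> nat) set" where
  "L_points N A = {p \<in> frame N. snd p \<le> 3 \<or> fst p \<le> 2} \<union> (\<lambda>i. (2 * i + 1, 2)) ` A"

definition R_points :: "nat \<Rightarrow> nat set \<Rightarrow> (nat \<times> nat) set" where
  "R_points N B = {p \<in> frame N. 4 \<le> snd p \<and> 2 \<le> fst p} \<union> (\<lambda>i. (2 * i + 1, 3)) ` B"

definition shared_rung :: "(nat \<times> nat) set" where
  "shared_rung = {2} \<times> {4, 5}"

definition lattice_graph :: "(nat \<times> nat) set \<Rightarrow> (nat \<times> nat) graph" where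
  "lattice_graph P = (P, {(p, q). p \<in> P \<and> q \<in> P \<and> lattice_adj p q})"

definition comb :: "nat \<Rightarrow> nat set \<Rightarrow> nat set \<Rightarrow> (nat \<times> nat) graph" where
  "comb N A B = graph_union (lattice_graph (L_points N A)) (lattice_graph (R_points N B))"

lemma verts_lattice_graph [simp]: "verts (lattice_graph P) = P"
  by (simp add: lattice_graph_def verts_def)

lemma edges_lattice_graph [simp]:
  "edges (lattice_graph P) = {(p, q). p \<in> P \<and> q \<in> P \<and> lattice_adj p q}"
  by (simp add: lattice_graph_def edges_def)

lemma lattice_graph_wf: "edges (lattice_graph P) \<subseteq> verts (lattice_graph P) \<times> verts (lattice_graph P)"
  by auto

lemma simple_graph_lattice_graph: "finite P \<Longrightarrow> simple_graph (lattice_graph P)"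
  unfolding simple_graph_def sym_def irrefl_def
  by (auto simp: lattice_adj_sym) (simp add: lattice_adj_def grid_adj_iff_unit_vec unit_vec_def)

lemma mem_frame:
  "(x, y) \<in> frame N \<longleftrightarrow> x \<le> comb_length N \<and> (y \<le> 1 \<or> y = 4 \<or> y = 5) \<or> x \<le> 1 \<and> y \<le> 5"
  unfolding frame_def by auto

lemma mem_L_points:
  "(x, y) \<in> L_points N A \<longleftrightarrow> (x, y) \<in> frame N \<and> (y \<le> 3 \<or> x \<le> 2) \<or> y = 2 \<and> (\<exists>i\<in>A. x = 2 * i + 1)"
  unfolding L_points_def by auto

lemma mem_R_points:
  "(x, y) \<in> R_points N B \<longleftrightarrow> (x, y) \<in> frame N \<and> 4 \<le> y \<and> 2 \<le> x \<or> y = 3 \<and> (\<exists>i\<in>B. x = 2 * i + 1)"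
  unfolding R_points_def by auto

lemma verts_comb: "verts (comb N A B) = L_points N A \<union> R_points N B"
  by (simp add: comb_def)

lemma edges_comb:
  "(p, q) \<in> edges (comb N A B) \<longleftrightarrow>
     (p \<in> L_points N A \<and> q \<in> L_points N A \<or> p \<in> R_points N B \<and> q \<in> R_points N B) \<and> lattice_adj p q"
  by (auto simp: comb_def)

lemma comb_wf: "edges (comb N A B) \<subseteq> verts (comb N A B) \<times> verts (comb N A B)"
  by (auto simp: comb_def)

lemma L_points_Int_R_points:
  assumes "B \<subseteq> {1..N}"
  shows "L_points N A \<inter> R_points N B = shared_rung"
proof -
  have pos: "0 < i" if "i \<in> B" for i using assms that by auto
  show ?thesis
    by (auto simp: mem_L_points mem_R_points mem_frame shared_rung_def comb_length_def)
      (use pos in fastforce)+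
qed

lemma verts_comb_subset:
  assumes "A \<subseteq> {1..N}" "B \<subseteq> {1..N}"
  shows "verts (comb N A B) \<subseteq> {..comb_length N} \<times> {..5}"
  using assms unfolding verts_comb L_points_def R_points_def frame_def comb_length_def by force

lemma card_verts_comb:
  assumes "A \<subseteq> {1..N}" "B \<subseteq> {1..N}" "1 \<le> N"
  shows "card (verts (comb N A B)) \<le> 30 * N"
proof -
  have "card (verts (comb N A B)) \<le> card ({..comb_length N} \<times> {..5::nat})"
    using verts_comb_subset[OF assms(1,2)] by (intro card_mono) auto
  also have "\<dots> = (2 * N + 3) * 6" by (simp add: card_cartesian_product comb_length_def)
  also have "\<dots> \<le> 30 * N" using assms(3) by simp
  finally show ?thesis .
qed

lemma finite_verts_comb:
  assumes "A \<subseteq> {1..N}" "B \<subseteq> {1..N}"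
  shows "finite (verts (comb N A B))"
  using verts_comb_subset[OF assms] by (rule finite_subset) simp

lemma frame_subset_verts_comb: "frame N \<subseteq> verts (comb N A B)"
  unfolding verts_comb L_points_def R_points_def by auto

lemma comb_edge_if_frame:
  assumes "p \<in> frame N" "q \<in> frame N" "lattice_adj p q"
  shows "(p, q) \<in> edges (comb N A B)"
proof -
  obtain x y x' y' where pq: "p = (x, y)" "q = (x', y')" by fastforce
  with assms have "(y \<le> 3 \<or> x \<le> 2) \<and> (y' \<le> 3 \<or> x' \<le> 2) \<or> 4 \<le> y \<and> 2 \<le> x \<and> 4 \<le> y' \<and> 2 \<le> x'"
    unfolding pq mem_frame lattice_adj_iff by arith
  with assms pq show ?thesis
    unfolding edges_comb L_points_def R_points_def by auto
qed

lemma comb_cross_edge: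
  assumes "B \<subseteq> {1..N}" "p \<in> L_points N A" "p \<notin> R_points N B" "q \<in> R_points N B" "q \<notin> L_points N A"
    and "lattice_adj p q"
  shows "\<exists>i\<in>A \<inter> B. p = (2 * i + 1, 2) \<and> q = (2 * i + 1, 3)"
proof -
  obtain x y x' y' where pq: "p = (x, y)" "q = (x', y')" by fastforce
  consider (tooth) j where "j \<in> B" "q = (2 * j + 1, 3)"
    | (frame) "q \<in> frame N" "4 \<le> y'" "3 \<le> x'"
    using assms(4,5) pq unfolding L_points_def R_points_def by force
  then show ?thesis
  proof cases
    case tooth
    with assms(1) have "0 < j" by auto
    from assms(2) consider i where "i \<in> A" "p = (2 * i + 1, 2)"
      | "p \<in> frame N" "y \<le> 3 \<or> x \<le> 2"
      using pq unfolding L_points_def by force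
    then show ?thesis
    proof cases
      case 1
      with tooth assms(6) show ?thesis by (auto simp: lattice_adj_iff)
    next
      case 2
      with tooth \<open>0 < j\<close> assms(6) have False
        unfolding pq mem_frame lattice_adj_iff prod.inject by arith
      then show ?thesis ..
    qed
  next
    case frame
    from assms(2,3) have "p \<in> frame N \<and> (y \<le> 3 \<or> x \<le> 1) \<or> y = 2"
      using pq unfolding L_points_def R_points_def by force
    with frame assms(6) have False
      unfolding pq mem_frame lattice_adj_iff by arith
    then show ?thesis ..
  qed
qed

lemma comb_edge_if_disjoint:
  assumes "B \<subseteq> {1..N}" "A \<inter> B = {}"
    and "p \<in> verts (comb N A B)" "q \<in> verts (comb N A B)" "lattice_adj p q"
  shows "(p, q) \<in> edges (comb N A B)"
  using assms comb_cross_edge[OF assms(1), of p A q] comb_cross_edge[OF assms(1), of q A p]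
  by (auto simp: verts_comb edges_comb lattice_adj_sym)

lemma comb_teeth_not_adjacent:
  assumes "0 < i"
  shows "((2 * i + 1, 2), (2 * i + 1, 3)) \<notin> edges (comb N A B)"
  using assms by (simp add: edges_comb mem_L_points mem_R_points mem_frame)

definition grid_embedding :: "'v graph \<Rightarrow> ('v \<Rightarrow> int \<times> int) \<Rightarrow> bool" where
  "grid_embedding G g \<longleftrightarrow> inj_on g (verts G) \<and>
     (\<forall>u\<in>verts G. \<forall>v\<in>verts G. (u, v) \<in> edges G \<longleftrightarrow> grid_adj (g u) (g v))"

lemma frame_rigid:
  fixes g :: "nat \<times> nat \<Rightarrow> int \<times> int"
  assumes hom: "grid_inj_hom (frame N) g"
  defines "u \<equiv> g (1, 0) - g (0, 0)" and "e \<equiv> g (0, 1) - g (0, 0)"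
  shows "unit_vec u" "unit_vec e" "orth u e"
    and "k < comb_length N \<Longrightarrow> j \<in> {0, 1, 4, 5} \<Longrightarrow> g (Suc k, j) = g (k, j) + u"
    and "k \<le> comb_length N \<Longrightarrow> g (k, 1) = g (k, 0) + e"
    and "k \<le> comb_length N \<Longrightarrow> g (k, 4) = g (k, 1) + e + e + e"
    and "k \<le> comb_length N \<Longrightarrow> g (k, 5) = g (k, 4) + e"
proof -
  define W where "W = comb_length N"
  have "2 \<le> W" by (simp add: W_def comb_length_def)
  have "grid_inj_hom ({..W} \<times> {0, 1}) g"
    by (rule grid_inj_hom_mono[OF hom]) (auto simp: frame_def W_def)
  note bottom = grid_ladder_rigid[OF this]
  have "grid_inj_hom ({..5} \<times> {0, 1}) (g \<circ> prod.swap)"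
    by (rule grid_inj_hom_comp[OF hom]) (auto simp: frame_def lattice_adj_iff)
  note left = grid_ladder_rigid[OF this, simplified]
  have "grid_inj_hom ({..W} \<times> {0, 1}) (g \<circ> (\<lambda>(x, y). (x, y + 4)))"
    by (rule grid_inj_hom_comp[OF hom]) (auto simp: frame_def W_def lattice_adj_iff inj_on_def)
  note top = grid_ladder_rigid[OF this, simplified]
  have "grid_adj (g (0, 0)) (g (1, 0))" "grid_adj (g (0, 0)) (g (0, 1))"
    using hom unfolding grid_inj_hom_def by (simp_all add: frame_def lattice_adj_iff)
  then show "unit_vec u" "unit_vec e"
    by (simp_all add: u_def e_def grid_adj_iff_unit_vec)
  show "orth u e"
    using bottom(3) \<open>2 \<le> W\<close> by (simp add: u_def e_def)
  have row0: "g (Suc k, 0) = g (k, 0) + u" if "k < W" for k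
    using bottom(2)[OF that] by (simp add: u_def algebra_simps)
  show rung01: "g (k, 1) = g (k, 0) + e" if "k \<le> W" for k
    using bottom(1)[OF that] by (simp add: e_def algebra_simps)
  have column: "g (0, Suc k) = g (0, k) + e" if "k < 5" for k
    using left(2)[OF that] by (simp add: e_def algebra_simps)
  have row4: "g (Suc k, 4) = g (k, 4) + u" if "k < W" for k
    using top(2)[OF that] left(1)[of 4] by (simp add: u_def algebra_simps)
  show rung45: "g (k, 5) = g (k, 4) + e" if "k \<le> W" for k
    using top(1)[OF that] column[of 4] by (simp add: algebra_simps)
  show "g (Suc k, j) = g (k, j) + u" if "k < W" "j \<in> {0, 1, 4, 5}" for k j
    using that row0 row4 rung01[of k] rung01[of "Suc k"] rung45[of k] rung45[of "Suc k"]
    by (auto simp: algebra_simps)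
  show "g (k, 4) = g (k, 1) + e + e + e" if "k \<le> W" for k
    using that
  proof (induction k)
    case 0
    then show ?case using column[of 1] column[of 2] column[of 3] rung01[of 0] by (simp add: numeral_eq_Suc)
  next
    case (Suc k)
    then show ?case using row4[of k] row0[of k] rung01[of k] rung01[of "Suc k"] by (simp add: algebra_simps)
  qed
qed

lemma grid_induced_comb_if_disjoint:
  assumes "A \<subseteq> {1..N}" "B \<subseteq> {1..N}" "A \<inter> B = {}"
  shows "grid_induced (comb N A B)"
  unfolding grid_induced_def
proof (intro conjI exI[of _ "map_prod int int"])
  show "finite (verts (comb N A B))"
    by (rule finite_verts_comb[OF assms(1,2)])
  show "inj_on (map_prod int int) (verts (comb N A B))"
    by (auto simp: inj_on_def)
  show "\<forall>p\<in>verts (comb N A B). \<forall>q\<in>verts (comb N A B).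
      (p, q) \<in> edges (comb N A B) \<longleftrightarrow> grid_adj (map_prod int int p) (map_prod int int q)"
    using comb_edge_if_disjoint[OF assms(2,3)]
    by (auto simp: edges_comb simp flip: lattice_adj_def)
qed

lemma grid_embedding_comb_frame:
  assumes "grid_embedding (comb N A B) g"
  shows "grid_inj_hom (frame N) g"
  using assms inj_on_subset frame_subset_verts_comb comb_edge_if_frame
  unfolding grid_embedding_def grid_inj_hom_def by (metis subsetD)

lemma comb_lower_tooth:
  assumes emb: "grid_embedding (comb N A B) g" and "i \<in> A" "1 \<le> i" "i \<le> N"
  defines "e \<equiv> g (0, 1) - g (0, 0)"
  shows "g (2 * i + 1, 2) = g (2 * i + 1, 1) + e"
proof -
  define c u where "c = 2 * i + 1" and "u = g (1, 0) - g (0, 0)"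
  note rigid = frame_rigid[OF grid_embedding_comb_frame[OF emb], folded u_def e_def]
  have c: "c = Suc (2 * i)" "Suc c \<le> comb_length N"
    using assms(3,4) by (simp_all add: c_def comb_length_def)
  have tooth: "(c, 2) \<in> verts (comb N A B)"
    using assms(2) by (auto simp: c_def verts_comb L_points_def)
  have V: "(k, j) \<in> verts (comb N A B)" if "k \<le> comb_length N" "j \<le> 1" for k j
    using frame_subset_verts_comb that by (force simp: mem_frame)
  have edge: "((c, 1), (c, 2)) \<in> edges (comb N A B)"
    using assms(2) c(2) by (auto simp: edges_comb mem_L_points mem_frame lattice_adj_iff c_def)
  have nbrs: "g (Suc c, 1) = g (c, 1) + u" "g (2 * i, 1) = g (c, 1) - u" "g (c, 0) = g (c, 1) - e"
    using rigid(4)[of c 1] rigid(4)[of "2 * i" 1] rigid(5)[of c] c by (simp_all add: algebra_simps)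
  show ?thesis
    unfolding c_def[symmetric]
  proof (rule grid_adj_forced[OF rigid(1-3)])
    show "grid_adj (g (c, 1)) (g (c, 2))"
      using emb edge c tooth V unfolding grid_embedding_def by auto
    show "g (c, 2) \<noteq> g (c, 1) + u" "g (c, 2) \<noteq> g (c, 1) - u" "g (c, 2) \<noteq> g (c, 1) - e"
      unfolding nbrs[symmetric] using emb c tooth V unfolding grid_embedding_def by (auto simp: inj_on_eq_iff)
  qed
qed

lemma comb_upper_tooth:
  assumes emb: "grid_embedding (comb N A B) g" and "i \<in> B" "1 \<le> i" "i \<le> N"
  defines "e \<equiv> g (0, 1) - g (0, 0)"
  shows "g (2 * i + 1, 3) = g (2 * i + 1, 4) - e"
proof -
  define c u where "c = 2 * i + 1" and "u = g (1, 0) - g (0, 0)"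
  note rigid = frame_rigid[OF grid_embedding_comb_frame[OF emb], folded u_def e_def]
  have c: "c = Suc (2 * i)" "Suc c \<le> comb_length N"
    using assms(3,4) by (simp_all add: c_def comb_length_def)
  have tooth: "(c, 3) \<in> verts (comb N A B)"
    using assms(2) by (auto simp: c_def verts_comb R_points_def)
  have V: "(k, j) \<in> verts (comb N A B)" if "k \<le> comb_length N" "j \<in> {4, 5}" for k j
    using frame_subset_verts_comb that by (force simp: mem_frame)
  have edge: "((c, 4), (c, 3)) \<in> edges (comb N A B)"
    using assms(2,3) c(2) by (auto simp: edges_comb mem_R_points mem_frame lattice_adj_iff c_def)
  have nbrs: "g (Suc c, 4) = g (c, 4) + u" "g (2 * i, 4) = g (c, 4) - u" "g (c, 5) = g (c, 4) - - e"
    using rigid(4)[of c 4] rigid(4)[of "2 * i" 4] rigid(7)[of c] c by (simp_all add: algebra_simps)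
  have "unit_vec (- e)" "orth u (- e)"
    using rigid(2,3) by (simp_all add: orth_def)
  then show ?thesis
    unfolding c_def[symmetric] diff_conv_add_uminus[of _ e]
  proof (rule grid_adj_forced[OF rigid(1)])
    show "grid_adj (g (c, 4)) (g (c, 3))"
      using emb edge c tooth V unfolding grid_embedding_def by auto
    show "g (c, 3) \<noteq> g (c, 4) + u" "g (c, 3) \<noteq> g (c, 4) - u" "g (c, 3) \<noteq> g (c, 4) - - e"
      unfolding nbrs[symmetric] using emb c tooth V unfolding grid_embedding_def by (auto simp: inj_on_eq_iff)
  qed
qed

lemma comb_not_grid_induced:
  assumes "A \<subseteq> {1..N}" "B \<subseteq> {1..N}" "i \<in> A \<inter> B"
  shows "\<not> grid_induced (comb N A B)"
proof
  assume "grid_induced (comb N A B)"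
  then obtain g where emb: "grid_embedding (comb N A B) g"
    unfolding grid_induced_def grid_embedding_def by blast
  have i: "1 \<le> i" "i \<le> N" using assms by auto
  define e where "e = g (0, 1) - g (0, 0)"
  have "g (2 * i + 1, 4) = g (2 * i + 1, 1) + e + e + e"
    using frame_rigid(6)[OF grid_embedding_comb_frame[OF emb], of "2 * i + 1"] i
    by (simp add: comb_length_def e_def)
  moreover have "g (2 * i + 1, 2) = g (2 * i + 1, 1) + e" "g (2 * i + 1, 3) = g (2 * i + 1, 4) - e"
    using comb_lower_tooth[OF emb _ i] comb_upper_tooth[OF emb _ i] assms(3) by (simp_all add: e_def)
  ultimately have "g (2 * i + 1, 3) = g (2 * i + 1, 2) + e"
    by (simp add: algebra_simps)
  then have "grid_adj (g (2 * i + 1, 2)) (g (2 * i + 1, 3))"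
    using frame_rigid(2)[OF grid_embedding_comb_frame[OF emb]] by (simp add: grid_adj_iff_unit_vec e_def)
  moreover have "(2 * i + 1, 2) \<in> verts (comb N A B)" "(2 * i + 1, 3) \<in> verts (comb N A B)"
    using assms(3) by (auto simp: verts_comb mem_L_points mem_R_points)
  ultimately have "((2 * i + 1, 2), (2 * i + 1, 3)) \<in> edges (comb N A B)"
    using emb unfolding grid_embedding_def by blast
  with comb_teeth_not_adjacent i(1) show False by simp
qed

text \<open>A tooth (x, 3) of R is entered from row 4, so it is ranked above that row.\<close>

definition comb_rank :: "nat \<times> nat \<Rightarrow> nat" where
  "comb_rank p = 2 * fst p + (if 2 \<le> fst p \<and> snd p = 3 then 6 else snd p)"

lemma comb_descent:
  assumes "A \<subseteq> {1..N}" "B \<subseteq> {1..N}" "p \<in> verts (comb N A B)" "p \<noteq> (0, 0)"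
  shows "\<exists>q\<in>verts (comb N A B). (p, q) \<in> edges (comb N A B) \<and> comb_rank q < comb_rank p"
proof -
  obtain x y where p: "p = (x, y)" by fastforce
  define q where "q = (if y = 0 then (x - 1, 0) else if 2 \<le> x \<and> y = 3 then (x, 4)
    else if 0 < x \<and> y = 4 then (x - 1, 4) else if y = 5 then (x, 4) else (x, y - 1))"
  have "x \<le> comb_length N" "y \<le> 5" using verts_comb_subset[OF assms(1,2)] assms(3) p by auto
  moreover from this have "y = 0 \<or> y = 1 \<or> y = 2 \<or> y = 3 \<or> y = 4 \<or> y = 5" by auto
  ultimately have "q \<in> verts (comb N A B) \<and> (p, q) \<in> edges (comb N A B) \<and> comb_rank q < comb_rank p"
    using assms(3,4) unfolding p
    by (elim disjE) (auto simp: q_def comb_rank_def verts_comb edges_comb mem_L_points mem_R_points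
        mem_frame lattice_adj_iff)
  then show ?thesis by blast
qed

lemma connected_comb:
  assumes "A \<subseteq> {1..N}" "B \<subseteq> {1..N}"
  shows "connected_graph (comb N A B)"
proof (rule connected_graph_descent[where r = "(0, 0)" and m = comb_rank])
  show "sym (edges (comb N A B))"
    unfolding sym_def by (auto simp: edges_comb lattice_adj_sym)
qed (use comb_descent[OF assms] in blast)

lemma closed_nbhd_comb:
  assumes "1 \<le> N" "A \<subseteq> {1..N}" "B \<subseteq> {1..N}"
  shows "closed_nbhd (comb N A B) shared_rung = {1..3} \<times> {4, 5}"
proof -
  have "3 \<le> comb_length N" using assms(1) by (simp add: comb_length_def)
  have nbr: "v \<in> {1..3} \<times> {4, 5}"
    if "v \<in> verts (comb N A B)" "u \<in> shared_rung" "(u, v) \<in> edges (comb N A B)" for u v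
    using that verts_comb_subset[OF assms(2,3)]
    by (cases v) (auto simp: shared_rung_def edges_comb lattice_adj_iff mem_L_points mem_R_points mem_frame)
  have rung: "(k, j) \<in> shared_rung \<or> ((2, j), (k, j)) \<in> edges (comb N A B)"
    if "1 \<le> k" "k \<le> 3" "j \<in> {4, 5}" for j k
    using \<open>3 \<le> comb_length N\<close> that
    by (auto simp: shared_rung_def edges_comb mem_L_points mem_R_points mem_frame lattice_adj_iff)
  have "{1..3} \<times> {4, 5} \<subseteq> verts (comb N A B)"
    using frame_subset_verts_comb \<open>3 \<le> comb_length N\<close> by (force simp: mem_frame)
  show ?thesis
  proof (intro equalityI subsetI)
    fix v assume "v \<in> closed_nbhd (comb N A B) shared_rung"
    then consider "v \<in> shared_rung"
      | u where "u \<in> shared_rung" "v \<in> verts (comb N A B)" "(u, v) \<in> edges (comb N A B)"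
      unfolding closed_nbhd_def by blast
    then show "v \<in> {1..3} \<times> {4, 5}"
    proof cases
      case 1
      then show ?thesis by (auto simp: shared_rung_def)
    next
      case 2
      then show ?thesis by (intro nbr)
    qed
  next
    fix v :: "nat \<times> nat" assume v: "v \<in> {1..3} \<times> {4, 5}"
    then obtain k j where "v = (k, j)" "1 \<le> k" "k \<le> 3" "j \<in> {4, 5}" by auto
    with rung[of k j] v \<open>{1..3} \<times> {4, 5} \<subseteq> verts (comb N A B)\<close>
    show "v \<in> closed_nbhd (comb N A B) shared_rung"
      unfolding closed_nbhd_def shared_rung_def by blast
  qed
qed

lemma induced_sub_comb_rung_nbhd:
  assumes "1 \<le> N"
  shows "induced_sub (comb N A B) ({1..3} \<times> {4, 5}) = lattice_graph ({1..3} \<times> {4, 5})"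
proof -
  let ?K = "{1..3} \<times> {4, 5} :: (nat \<times> nat) set"
  have "3 \<le> comb_length N" using assms by (simp add: comb_length_def)
  then have "?K \<subseteq> verts (comb N A B)"
    using frame_subset_verts_comb by (force simp: mem_frame)
  moreover have "(p, q) \<in> edges (comb N A B)" if "p \<in> ?K" "q \<in> ?K" "lattice_adj p q" for p q
  proof -
    have L: "v \<in> L_points N A" if "v \<in> ?K" "fst v \<le> 2" for v
      using that \<open>3 \<le> comb_length N\<close> by (auto simp: L_points_def frame_def)
    have R: "v \<in> R_points N B" if "v \<in> ?K" "2 \<le> fst v" for v
      using that \<open>3 \<le> comb_length N\<close> by (auto simp: R_points_def frame_def)
    obtain x y x' y' where pq: "p = (x, y)" "q = (x', y')" by fastforce
    have "x \<le> 2 \<and> x' \<le> 2 \<or> 2 \<le> x \<and> 2 \<le> x'"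
      using \<open>lattice_adj p q\<close> unfolding pq lattice_adj_iff by arith
    with that L R show ?thesis by (auto simp: edges_comb pq)
  qed
  moreover have "lattice_adj p q" if "(p, q) \<in> edges (comb N A B)" for p q
    using that by (simp add: edges_comb)
  ultimately have "verts (comb N A B) \<inter> ?K = ?K"
    "edges (comb N A B) \<inter> (?K \<times> ?K) = {(p, q). p \<in> ?K \<and> q \<in> ?K \<and> lattice_adj p q}"
    by blast+
  then show ?thesis
    by (simp add: induced_sub_def lattice_graph_def)
qed

definition L_graph :: "nat \<Rightarrow> nat set \<Rightarrow> nat graph" where
  "L_graph N X = map_graph prod_encode (lattice_graph (L_points N X))"

definition R_graph :: "nat \<Rightarrow> nat set \<Rightarrow> nat graph" where
  "R_graph N X = map_graph prod_encode (lattice_graph (R_points N X))"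

abbreviation glued_comb :: "nat \<Rightarrow> nat set \<Rightarrow> nat set \<Rightarrow> (nat + nat) graph" where
  "glued_comb N A B \<equiv> glue (prod_encode ` shared_rung) (L_graph N A) (R_graph N B)"

definition comb_code :: "nat \<Rightarrow> nat set \<Rightarrow> nat \<times> nat \<Rightarrow> nat + nat" where
  "comb_code N A v = (if v \<in> L_points N A then Inl (prod_encode v) else Inr (prod_encode v))"

lemma inj_comb_code: "inj (comb_code N A)"
  by (auto simp: inj_def comb_code_def split: if_splits)

lemma glued_comb_eq_map_graph:
  assumes "B \<subseteq> {1..N}"
  shows "glued_comb N A B = map_graph (comb_code N A) (comb N A B)"
proof -
  have "verts (lattice_graph (L_points N A)) \<inter> verts (lattice_graph (R_points N B)) = shared_rung"
    using L_points_Int_R_points[OF assms] by simp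
  from glue_map_graph[OF inj_prod_encode lattice_graph_wf lattice_graph_wf this] show ?thesis
    unfolding L_graph_def R_graph_def comb_def comb_code_def by simp
qed

lemma closed_nbhd_glued_comb:
  assumes "1 \<le> N" "A \<subseteq> {1..N}" "B \<subseteq> {1..N}"
  shows "closed_nbhd (glued_comb N A B) (Inl ` prod_encode ` shared_rung) = comb_code N A ` ({1..3} \<times> {4, 5})"
proof -
  have rung: "shared_rung \<subseteq> L_points N A" "shared_rung \<subseteq> verts (comb N A B)"
    using L_points_Int_R_points[OF assms(3)] by (auto simp: verts_comb)
  have "Inl ` prod_encode ` shared_rung = comb_code N A ` shared_rung"
    unfolding image_image comb_code_def using rung(1) by (intro image_cong) auto
  then show ?thesis
    unfolding glued_comb_eq_map_graph[OF assms(3)] closed_nbhd_comb[OF assms, symmetric]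
    using closed_nbhd_map_graph[OF inj_on_subset[OF inj_comb_code subset_UNIV] comb_wf rung(2)]
    by simp
qed

lemma induced_nbhd_glued_comb:
  assumes "1 \<le> N" "A \<subseteq> {1..N}" "B \<subseteq> {1..N}"
  shows "induced_sub (glued_comb N A B)
      (closed_nbhd (glued_comb N A B) (Inl ` prod_encode ` shared_rung))
    = map_graph (\<lambda>v. if fst v \<le> 2 then Inl (prod_encode v) else Inr (prod_encode v))
        (lattice_graph ({1..3} \<times> {4, 5}))"
proof -
  have K: "{1..3} \<times> {4, 5} \<subseteq> verts (comb N A B)"
    using closed_nbhd_comb[OF assms] by (auto simp: closed_nbhd_def)
  have "comb_code N A v = (if fst v \<le> 2 then Inl (prod_encode v) else Inr (prod_encode v))"
    if "v \<in> {1..3} \<times> {4, 5}" for v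
    using that assms(1) by (auto simp: comb_code_def L_points_def frame_def comb_length_def)
  then show ?thesis
    unfolding closed_nbhd_glued_comb[OF assms]
    unfolding glued_comb_eq_map_graph[OF assms(3)] induced_sub_map_graph[OF inj_on_subset[OF inj_comb_code subset_UNIV] comb_wf K]
      induced_sub_comb_rung_nbhd[OF assms(1)]
    by (intro map_graph_cong lattice_graph_wf) simp
qed

lemma simple_graph_L_graph_R_graph:
  assumes "X \<subseteq> {1..N}"
  shows "simple_graph (L_graph N X)" "simple_graph (R_graph N X)"
proof -
  have "finite (L_points N X)" "finite (R_points N X)"
    using finite_verts_comb[OF assms assms] by (simp_all add: verts_comb)
  then show "simple_graph (L_graph N X)" "simple_graph (R_graph N X)"
    unfolding L_graph_def R_graph_def
    by (simp_all add: simple_graph_map_graph[OF inj_prod_encode] simple_graph_lattice_graph)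
qed

lemma shared_rung_code_subset:
  assumes "X \<subseteq> {1..N}"
  shows "prod_encode ` shared_rung \<subseteq> verts (L_graph N X)" "prod_encode ` shared_rung \<subseteq> verts (R_graph N X)"
  using L_points_Int_R_points[OF assms, of X] by (auto simp: L_graph_def R_graph_def)

lemma connected_glued_comb:
  assumes "A \<subseteq> {1..N}" "B \<subseteq> {1..N}"
  shows "connected_graph (glued_comb N A B)"
  unfolding glued_comb_eq_map_graph[OF assms(2)] by (rule connected_graph_map_graph[OF connected_comb[OF assms]])

lemma card_verts_glued_comb:
  assumes "1 \<le> N" "A \<subseteq> {1..N}" "B \<subseteq> {1..N}"
  shows "real (card (verts (glued_comb N A B))) \<le> 30 * real N"
  unfolding glued_comb_eq_map_graph[OF assms(3)] using card_verts_comb[OF assms(2,3,1)]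
  by (simp add: card_image inj_on_subset[OF inj_comb_code subset_UNIV])

lemma card_closed_nbhd_glued_comb:
  assumes "1 \<le> N" "A \<subseteq> {1..N}" "B \<subseteq> {1..N}"
  shows "card (closed_nbhd (glued_comb N A B) (Inl ` prod_encode ` shared_rung)) \<le> 6"
proof -
  have "card (comb_code N A ` ({1..3} \<times> {4, 5})) \<le> card ({1..3::nat} \<times> {4, 5::nat})"
    by (rule card_image_le) simp
  then show ?thesis
    unfolding closed_nbhd_glued_comb[OF assms] by (simp add: card_cartesian_product)
qed

lemma grid_induced_glued_comb_iff:
  assumes "A \<subseteq> {1..N}" "B \<subseteq> {1..N}"
  shows "grid_induced (glued_comb N A B) \<longleftrightarrow> A \<inter> B = {}"
  unfolding glued_comb_eq_map_graph[OF assms(2)]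
    grid_induced_map_graph[OF inj_on_subset[OF inj_comb_code subset_UNIV] comb_wf]
  using grid_induced_comb_if_disjoint[OF assms] comb_not_grid_induced[OF assms] by blast

theorem corollary5p6:
  shows "disjointness_expressing grid_induced 6 1"
  by (rule disjointness_expressingI[where \<alpha> = 30 and L = L_graph and R = R_graph
        and S = "\<lambda>_. prod_encode ` shared_rung"])
     (simp_all add: simple_graph_L_graph_R_graph shared_rung_code_subset connected_glued_comb
       card_verts_glued_comb card_closed_nbhd_glued_comb grid_induced_glued_comb_iff induced_nbhd_glued_comb)

end
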